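(* Let $L_s, L_t \ge 0$ be integers, let $N_p, N_c \ge 1$ be integers, and for $1\le p\le N_p$, $1\le q\le N_c$ let $\tilde f_T(p)$, $f_d(\psi_{p,q})$, $f_R(\psi_{p,q})$ be real numbers and $\sigma^2_{p,q} \ge 0$; let $\sigma_n^2\ge 0$. For a real $f$ and integers $L\ge 0$, $0\le l\le L$, define $\mathbf{g}^{(L)}_{l}(f) = [e^{\mathrm{j}2\pi f(0-l)}, e^{\mathrm{j}2\pi f(1-l)},\ldots,e^{\mathrm{j}2\pi f(L-l)}]^T \in \mathbb{C}^{(L+1)\times 1}$, and let $\mathbf{e}^{(L)}_{l}\in\mathbb{C}^{(L+1)\times 1}$ be the vector with a $1$ in position $l$ (positions indexed $0,\ldots,L$) and zeros elsewhere. Set $\breve{\mathbf{a}}_{T,l_1}(p)=\mathbf{g}^{(L_s)}_{l_1}(\tilde f_T(p))$, $\breve{\mathbf{b}}_{l_2}(p,q)=\mathbf{g}^{(L_t)}_{l_2}(f_d(\psi_{p,q}))$, $\breve{\mathbf{a}}_{R,l_3}(p,q)=\mathbf{g}^{(L_s)}_{l_3}(f_R(\psi_{p,q}))$, and for $0\le l_1\le L_s$, $0\le l_2\le L_t$, $0\le l_3\le L_s$ define $$\mathbf{z}_{l_1,l_2,l_3}=\sum_{p=1}^{N_p}\sum_{q=1}^{N_c}\sigma^2_{p,q}\,\breve{\mathbf{a}}_{T,l_1}(p)\otimes\breve{\mathbf{b}}_{l_2}(p,q)\otimes\breve{\mathbf{a}}_{R,l_3}(p,q)+\sigma_n^2\,\mathbf{e}^{(L_s)}_{l_1}\otimes\mathbf{e}^{(L_t)}_{l_2}\otimes\mathbf{e}^{(L_s)}_{l_3},$$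 and $\mathbf{R}_v=\sum_{l_1=0}^{L_s}\sum_{l_2=0}^{L_t}\sum_{l_3=0}^{L_s}\mathbf{z}_{l_1,l_2,l_3}\mathbf{z}_{l_1,l_2,l_3}^H$. Let $\breve{\mathbf{v}}_{0,0,0}(p,q)=\breve{\mathbf{a}}_{T,0}(p)\otimes\breve{\mathbf{b}}_{0}(p,q)\otimes\breve{\mathbf{a}}_{R,0}(p,q)$. Then $$\mathbf{R}_v = C^2\Big(\sum_{p=1}^{N_p}\sum_{q=1}^{N_c}\sigma^2_{p,q}\,\breve{\mathbf{v}}_{0,0,0}(p,q)\breve{\mathbf{v}}_{0,0,0}^H(p,q)+\sigma_n^2\mathbf{I}\Big)^2,$$ where $C$ is a constant and $\mathbf{I}$ is the identity of size $(L_s+1)^2(L_t+1)$.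
   Context: $\otimes$ denotes the Kronecker product, $(\cdot)^H$ the conjugate transpose, and $\mathrm{j}=\sqrt{-1}$. The vectors $\mathbf{z}_{l_1,l_2,l_3}$ are the 3-D spatially smoothed subvectors of a virtual (difference-coarray) space-time-range snapshot built from the clutter covariance of a co-prime frequency diverse array radar, with $\tilde f_T(p)$ the compensated transmit (range) frequency of the $p$-th ambiguous range region, $f_d$ the Doppler frequency and $f_R$ the receive spatial frequency of clutter patch $(p,q)$, $\sigma_{p,q}^2$ the clutter patch power and $\sigma_n^2$ the noise power. *)

theory Defs
  imports Complex_Main
begin

text \<open>Vectors of length n are functions nat => complex, meaningful on indices 0..n-1;
  n x m matrices are functions nat => nat => complex, meaningful on indices i<n, j<m.\<close>

definition steer :: "nat \<Rightarrow> nat \<Rightarrow> real \<Rightarrow> nat \<Rightarrow> complex" where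
  "steer L l f = (\<lambda>k. if k \<le> L then cis (2 * pi * f * (real k - real l)) else 0)"

definition unitvec :: "nat \<Rightarrow> nat \<Rightarrow> nat \<Rightarrow> complex" where
  "unitvec L l = (\<lambda>k. if k \<le> L \<and> k = l then 1 else 0)"

definition kron :: "nat \<Rightarrow> (nat \<Rightarrow> complex) \<Rightarrow> (nat \<Rightarrow> complex) \<Rightarrow> nat \<Rightarrow> complex" where
  "kron m u v = (\<lambda>i. u (i div m) * v (i mod m))"

definition outer :: "(nat \<Rightarrow> complex) \<Rightarrow> (nat \<Rightarrow> complex) \<Rightarrow> nat \<Rightarrow> nat \<Rightarrow> complex" where
  "outer u v = (\<lambda>i j. u i * cnj (v j))"

definition mmult :: "nat \<Rightarrow> (nat \<Rightarrow> nat \<Rightarrow> complex) \<Rightarrow> (nat \<Rightarrow> nat \<Rightarrow> complex) \<Rightarrow> nat \<Rightarrow> nat \<Rightarrow> complex" where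
  "mmult n A B = (\<lambda>i j. \<Sum>k<n. A i k * B k j)"

definition idm :: "nat \<Rightarrow> nat \<Rightarrow> complex" where
  "idm = (\<lambda>i j. if i = j then 1 else 0)"

definition kron3 :: "nat \<Rightarrow> nat \<Rightarrow> (nat \<Rightarrow> complex) \<Rightarrow> (nat \<Rightarrow> complex) \<Rightarrow> (nat \<Rightarrow> complex) \<Rightarrow> nat \<Rightarrow> complex" where
  "kron3 Ls Lt a b c = kron ((Lt + 1) * (Ls + 1)) a (kron (Ls + 1) b c)"

end

theory Submission imports Defs begin

text \<open>Shifting a steering vector by \<open>l\<close> multiplies it by the conjugate of its \<open>l\<close>-th entry, and
  the Kronecker product of unit vectors is the unit vector at the mixed-radix index
  \<open>(l1, l2, l3)\<close>. Hence each smoothed subvector \<open>z l1 l2 l3\<close> is exactly the column of the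
  Hermitian matrix \<open>M = \<Sum> \<sigma>\<^sup>2 v v\<^sup>H + \<sigma>\<^sub>n\<^sup>2 I\<close> at that index. As \<open>(l1, l2, l3)\<close> runs over all
  indices, \<open>R\<^sub>v\<close> is the sum of the outer products of all columns of \<open>M\<close>, i.e. \<open>M M\<^sup>H = M\<^sup>2\<close>;
  so the constant is \<open>C = 1\<close>.\<close>

lemma sum_lessThan_mult:
  fixes g :: "nat \<Rightarrow> 'a::comm_monoid_add"
  shows "(\<Sum>k<a * b. g k) = (\<Sum>i<a. \<Sum>j<b. g (i * b + j))"
proof -
  have "(\<Sum>k\<in>{i * b..<i * b + b}. g k) = (\<Sum>j<b. g (i * b + j))" for i
    using sum.shift_bounds_nat_ivl[of g 0 "i * b" b]
    by (simp add: lessThan_atLeast0 add.commute)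
  then show ?thesis
    by (simp add: sum.nat_group[symmetric])
qed

lemma kron_apply_index: "r < m \<Longrightarrow> kron m u v (l * m + r) = u l * v r"
  by (simp add: kron_def)

lemma kron_indicator:
  assumes "r < m"
  shows "kron m (\<lambda>k. if k = l then 1 else 0) (\<lambda>k. if k = r then 1 else 0)
           = (\<lambda>i. if i = l * m + r then 1 else 0)"
proof
  fix i
  have "(i div m = l \<and> i mod m = r) \<longleftrightarrow> i = l * m + r"
    using assms div_mult_mod_eq[of i m] by auto
  moreover have "kron m (\<lambda>k. if k = l then 1 else 0) (\<lambda>k. if k = r then 1 else 0) i
                   = (if i div m = l \<and> i mod m = r then 1 else 0)"
    by (simp add: kron_def)
  ultimately show "kron m (\<lambda>k. if k = l then 1 else 0) (\<lambda>k. if k = r then 1 else 0) i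
                     = (if i = l * m + r then 1 else 0)"
    by (simp only:)
qed

definition kron3_idx :: "nat \<Rightarrow> nat \<Rightarrow> nat \<Rightarrow> nat \<Rightarrow> nat \<Rightarrow> nat" where
  "kron3_idx Ls Lt l1 l2 l3 = l1 * ((Lt + 1) * (Ls + 1)) + (l2 * (Ls + 1) + l3)"

lemma kron3_inner_idx_less:
  fixes l2 l3 Ls Lt :: nat
  assumes "l2 \<le> Lt" "l3 \<le> Ls"
  shows "l2 * (Ls + 1) + l3 < (Lt + 1) * (Ls + 1)"
proof -
  have "(l2 + 1) * (Ls + 1) \<le> (Lt + 1) * (Ls + 1)"
    using assms(1) by (intro mult_le_mono1) simp
  then show ?thesis
    using assms by (simp add: algebra_simps)
qed

lemma kron3_apply_idx:
  assumes "l2 \<le> Lt" "l3 \<le> Ls"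
  shows "kron3 Ls Lt a b c (kron3_idx Ls Lt l1 l2 l3) = a l1 * b l2 * c l3"
proof -
  have "l3 < Ls + 1"
    using assms by simp
  then show ?thesis
    unfolding kron3_def kron3_idx_def
    by (simp only: kron_apply_index[OF kron3_inner_idx_less[OF assms]] kron_apply_index mult.assoc)
qed

lemma kron3_scale:
  "kron3 Ls Lt (\<lambda>k. a k * \<alpha>) (\<lambda>k. b k * \<beta>) (\<lambda>k. c k * \<gamma>) i
     = kron3 Ls Lt a b c i * (\<alpha> * \<beta> * \<gamma>)"
  by (simp add: kron3_def kron_def mult_ac)

lemma sum_kron3_idx:
  fixes g :: "nat \<Rightarrow> 'a::comm_monoid_add"
  shows "(\<Sum>k<(Ls + 1)^2 * (Lt + 1). g k)
           = (\<Sum>l1\<in>{0..Ls}. \<Sum>l2\<in>{0..Lt}. \<Sum>l3\<in>{0..Ls}. g (kron3_idx Ls Lt l1 l2 l3))"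
proof -
  have "(Ls + 1)^2 * (Lt + 1) = (Ls + 1) * ((Lt + 1) * (Ls + 1))"
    by (simp add: power2_eq_square algebra_simps)
  moreover have "{0..n} = {..<n + 1}" for n :: nat
    by auto
  ultimately show ?thesis
    by (simp only: sum_lessThan_mult kron3_idx_def)
qed

lemma steer_shift: "l \<le> L \<Longrightarrow> steer L l f k = steer L 0 f k * cnj (steer L 0 f l)"
  by (simp add: steer_def cis_cnj cis_mult algebra_simps)

lemma kron3_steer_shift:
  fixes f1 f2 f3 :: real
  assumes "l1 \<le> Ls" "l2 \<le> Lt" "l3 \<le> Ls"
  defines "v \<equiv> kron3 Ls Lt (steer Ls 0 f1) (steer Lt 0 f2) (steer Ls 0 f3)"
  shows "kron3 Ls Lt (steer Ls l1 f1) (steer Lt l2 f2) (steer Ls l3 f3) i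
           = v i * cnj (v (kron3_idx Ls Lt l1 l2 l3))"
proof -
  have "steer Ls l1 f1 = (\<lambda>k. steer Ls 0 f1 k * cnj (steer Ls 0 f1 l1))"
    and "steer Lt l2 f2 = (\<lambda>k. steer Lt 0 f2 k * cnj (steer Lt 0 f2 l2))"
    and "steer Ls l3 f3 = (\<lambda>k. steer Ls 0 f3 k * cnj (steer Ls 0 f3 l3))"
    by (intro ext steer_shift assms)+
  then show ?thesis
    by (simp only: v_def kron3_scale kron3_apply_idx[OF assms(2,3)] complex_cnj_mult)
qed

lemma kron3_unitvec:
  assumes "l1 \<le> Ls" "l2 \<le> Lt" "l3 \<le> Ls"
  shows "kron3 Ls Lt (unitvec Ls l1) (unitvec Lt l2) (unitvec Ls l3) i = idm i (kron3_idx Ls Lt l1 l2 l3)"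
proof -
  have "unitvec L l = (\<lambda>k. if k = l then 1 else 0)" if "l \<le> L" for L l
    using that by (auto simp: unitvec_def)
  moreover have "l3 < Ls + 1"
    using assms by simp
  ultimately show ?thesis
    using assms kron3_inner_idx_less[OF assms(2,3)]
    by (simp only: kron3_def kron_indicator kron3_idx_def idm_def)
qed

theorem theorem1:
  fixes Ls Lt Np Nc :: nat
    and fT :: "nat \<Rightarrow> real"
    and fd fR sig2 :: "nat \<Rightarrow> nat \<Rightarrow> real"
    and sign2 :: real
    and z :: "nat \<Rightarrow> nat \<Rightarrow> nat \<Rightarrow> nat \<Rightarrow> complex"
    and Rv :: "nat \<Rightarrow> nat \<Rightarrow> complex"
    and v0 :: "nat \<Rightarrow> nat \<Rightarrow> nat \<Rightarrow> complex"
    and M :: "nat \<Rightarrow> nat \<Rightarrow> complex"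
  assumes "Np \<ge> 1" and "Nc \<ge> 1"
    and "\<forall>p\<in>{1..Np}. \<forall>q\<in>{1..Nc}. sig2 p q \<ge> 0"
    and "sign2 \<ge> 0"
    and z_def: "\<And>l1 l2 l3. z l1 l2 l3 =
        (\<lambda>i. (\<Sum>p=1..Np. \<Sum>q=1..Nc. complex_of_real (sig2 p q) *
              kron3 Ls Lt (steer Ls l1 (fT p)) (steer Lt l2 (fd p q)) (steer Ls l3 (fR p q)) i)
            + complex_of_real sign2 * kron3 Ls Lt (unitvec Ls l1) (unitvec Lt l2) (unitvec Ls l3) i)"
    and Rv_def: "Rv = (\<lambda>i j. \<Sum>l1\<in>{0..Ls}. \<Sum>l2\<in>{0..Lt}. \<Sum>l3\<in>{0..Ls}.
                          outer (z l1 l2 l3) (z l1 l2 l3) i j)"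
    and v0_def: "\<And>p q. v0 p q = kron3 Ls Lt (steer Ls 0 (fT p)) (steer Lt 0 (fd p q)) (steer Ls 0 (fR p q))"
    and M_def: "M = (\<lambda>i j. (\<Sum>p=1..Np. \<Sum>q=1..Nc. complex_of_real (sig2 p q) * outer (v0 p q) (v0 p q) i j)
                         + complex_of_real sign2 * idm i j)"
  shows "\<exists>C::real. \<forall>i < (Ls + 1)^2 * (Lt + 1). \<forall>j < (Ls + 1)^2 * (Lt + 1).
           Rv i j = complex_of_real (C^2) * mmult ((Ls + 1)^2 * (Lt + 1)) M M i j"
proof -
  have column: "z l1 l2 l3 i = M i (kron3_idx Ls Lt l1 l2 l3)"
    if "l1 \<le> Ls" "l2 \<le> Lt" "l3 \<le> Ls" for l1 l2 l3 i
    \<comment> \<open>\<open>simp only\<close>: as a rewrite rule the shift lemma loops when \<open>l1 = l2 = l3 = 0\<close>\<close>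
    by (simp only: z_def M_def outer_def v0_def kron3_steer_shift[OF that] kron3_unitvec[OF that])
  have hermitian: "cnj (M i j) = M j i" for i j
    by (simp add: M_def outer_def idm_def mult.commute)
  have "Rv i j = mmult ((Ls + 1)^2 * (Lt + 1)) M M i j" for i j
  proof -
    have "Rv i j = (\<Sum>l1\<in>{0..Ls}. \<Sum>l2\<in>{0..Lt}. \<Sum>l3\<in>{0..Ls}.
                     M i (kron3_idx Ls Lt l1 l2 l3) * M (kron3_idx Ls Lt l1 l2 l3) j)"
      unfolding Rv_def outer_def by (intro sum.cong refl) (simp add: column hermitian)
    also have "\<dots> = (\<Sum>k<(Ls + 1)^2 * (Lt + 1). M i k * M k j)"
      by (rule sum_kron3_idx[symmetric])
    finally show ?thesis
      unfolding mmult_def .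
  qed
  then show ?thesis
    by (intro exI[of _ 1]) simp
qed

end
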